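(* Let $n\ge2$, $d\ge1$, $k\ge1$, $R>0$, and let $V\in\mathcal{C}^{k+1}(\mathbb{R}^d,\mathbb{R})$ satisfy $V(u)=|u|^2/2$ for all $u$ with $|u|\ge R$. Then: (1) every solution of $\ddot u(r)=-\frac{n-1}{r}\dot u(r)+\nabla V(u(r))$ (with initial data $(u,\dot u)$ prescribed at some $r_1>0$) is defined on the whole interval $(0,+\infty)$; (2) for every $u\in\mathcal{S}_V$, $\sup_{r\in(0,+\infty)}|u(r)|<R$.
   Context: $\mathcal{S}_V$ is the set of functions $u:[0,+\infty)\to\mathbb{R}^d$ satisfying $\ddot u(r)=-\frac{n-1}{r}\dot u(r)+\nabla V(u(r))$ on $(0,+\infty)$, $\dot u(r)\to0$ as $r\to0^+$, and $u(r)\to u_\infty$ as $r\to+\infty$ for some $u_\infty$ with $\nabla V(u_\infty)=0$ and $D^2V(u_\infty)$ positive definite. *)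

theory Defs
  imports "HOL-Analysis.Analysis"
begin

text \<open>Functions of class C^m on the whole space: C^0 = continuous;
  C^(m+1) = (Frechet) differentiable everywhere with every directional derivative
  (equivalently, every partial derivative, i.e. the derivative) of class C^m.\<close>
fun Ck :: "nat \<Rightarrow> ('a::euclidean_space \<Rightarrow> real) \<Rightarrow> bool" where
  "Ck 0 f = continuous_on UNIV f"
| "Ck (Suc m) f = ((\<forall>x. f differentiable (at x)) \<and>
      (\<forall>v. Ck m (\<lambda>x. frechet_derivative f (at x) v)))"

definition grad :: "('a::euclidean_space \<Rightarrow> real) \<Rightarrow> 'a \<Rightarrow> 'a" where
  "grad V u = (\<Sum>b\<in>Basis. frechet_derivative V (at u) b *\<^sub>R b)"

definition hess :: "('a::euclidean_space \<Rightarrow> real) \<Rightarrow> 'a \<Rightarrow> 'a \<Rightarrow> 'a \<Rightarrow> real" where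
  "hess V u h k = frechet_derivative (\<lambda>x. frechet_derivative V (at x) h) (at u) k"

definition pos_def_hess :: "('a::euclidean_space \<Rightarrow> real) \<Rightarrow> 'a \<Rightarrow> bool" where
  "pos_def_hess V u = (\<forall>h. h \<noteq> 0 \<longrightarrow> hess V u h h > 0)"

definition solves_on :: "nat \<Rightarrow> ('a::euclidean_space \<Rightarrow> real) \<Rightarrow> (real \<Rightarrow> 'a) \<Rightarrow> real set \<Rightarrow> bool" where
  "solves_on n V u J = (\<exists>u'. \<forall>r\<in>J.
      (u has_vector_derivative u' r) (at r) \<and>
      (u' has_vector_derivative (- ((real n - 1) / r) *\<^sub>R u' r + grad V (u r))) (at r))"

definition S_V :: "nat \<Rightarrow> ('a::euclidean_space \<Rightarrow> real) \<Rightarrow> (real \<Rightarrow> 'a) set" where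
  "S_V n V = {u. solves_on n V u {0<..} \<and>
      ((\<lambda>r. vector_derivative u (at r)) \<longlongrightarrow> 0) (at_right 0) \<and>
      (\<exists>uinf. (u \<longlongrightarrow> uinf) at_top \<and> grad V uinf = 0 \<and> pos_def_hess V uinf)}"

end

(*
  As a first order system for (u, u') the equation has the field
  (t, x, p) |-> (p, -(n-1)/t p + grad V x), which is continuous on (0,oo) x R^d x R^d and
  Lipschitz in (x, p) uniformly for t in compact subintervals: grad V is C^1 and equals the
  identity outside a ball, hence is globally Lipschitz. Picard-Lindeloef with a Bielecki weight,
  run forwards and, after reflecting time, backwards, gives a unique solution on all of (0,oo).

  Where |u| >= R the equation reads u'' = -(n-1)/r u' + u, so |u|^2 has no interior
  maximum there: at a critical point its second derivative is 2|u'|^2 + 2|u|^2 > 0. Near r = 0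
  the quantity r^(n-1) u.u' vanishes and increases while |u| >= R, so |u| would exceed a limit
  |u(0+)| >= R; and at infinity u tends to a zero of grad V, which lies inside the ball. So the
  supremum of |u| is either attained or the limit at an end, and in both cases it is < R.
*)
theory Submission
  imports Defs
begin

section \<open>Lipschitz ODEs on intervals\<close>

lemma has_vector_derivative_reflect:
  assumes "(z has_vector_derivative D) (at (- t) within uminus ` S)"
  shows "((\<lambda>s. z (- s)) has_vector_derivative - D) (at t within S)"
proof -
  have "(uminus has_vector_derivative (-1::real)) (at t within S)"
    by (auto intro!: derivative_eq_intros simp: has_real_derivative_iff_has_vector_derivative[symmetric])
  from vector_diff_chain_within[OF this, of z D] assms show ?thesis
    by (simp add: o_def)
qed

lemma has_vector_derivative_within_Un:
  assumes "(f has_vector_derivative f') (at x within S)"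
    and "(f has_vector_derivative f') (at x within T)"
  shows "(f has_vector_derivative f') (at x within S \<union> T)"
  using assms unfolding has_vector_derivative_def has_derivative_within
  by (simp add: Lim_within_Un)

lemma has_real_derivative_inner:
  fixes u v :: "real \<Rightarrow> 'a::real_inner"
  assumes "(u has_vector_derivative u') (at r)" and "(v has_vector_derivative v') (at r)"
  shows "((\<lambda>r. inner (u r) (v r)) has_real_derivative inner u' (v r) + inner (u r) v') (at r)"
proof -
  have "((\<lambda>r. inner (u r) (v r)) has_derivative (\<lambda>h. inner (u r) (h *\<^sub>R v') + inner (h *\<^sub>R u') (v r))) (at r)"
    using assms unfolding has_vector_derivative_def by (intro derivative_eq_intros) auto
  then show ?thesis
    unfolding has_field_derivative_def by (rule has_derivative_eq_rhs) (auto simp: algebra_simps)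
qed

lemma continuous_on_compose_field:
  assumes "continuous_on (S \<times> UNIV) (\<lambda>(t, y). f t y)" and "continuous_on S g"
  shows "continuous_on S (\<lambda>s. f s (g s))"
proof -
  have "continuous_on S (\<lambda>s. (s, g s))"
    by (intro continuous_intros assms(2))
  from continuous_on_compose2[OF assms(1) this] show ?thesis
    by auto
qed

lemma exp_weighted_picard_estimate:
  fixes f :: "real \<Rightarrow> 'y::euclidean_space \<Rightarrow> 'y"
  assumes cont: "continuous_on ({t0..d} \<times> UNIV) (\<lambda>(t, y). f t y)"
    and K: "K > 0" and lip: "\<And>t. t \<in> {t0..d} \<Longrightarrow> K-lipschitz_on UNIV (f t)"
    and g: "continuous_on {t0..d} g" and h: "continuous_on {t0..d} h"
    and D: "\<And>s. s \<in> {t0..d} \<Longrightarrow> dist (g s) (h s) \<le> D"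
    and \<tau>: "\<tau> \<in> {t0..d}"
  defines "E s \<equiv> exp (2 * K * (s - t0))"
  shows "norm (integral {t0..\<tau>} (\<lambda>s. f s (E s *\<^sub>R g s)) - integral {t0..\<tau>} (\<lambda>s. f s (E s *\<^sub>R h s)))
           \<le> D * (E \<tau> - 1) / 2"
proof -
  have integrable: "(\<lambda>s. f s (E s *\<^sub>R k s)) integrable_on {t0..\<tau>}" if "continuous_on {t0..d} k" for k
  proof (rule integrable_continuous_interval[OF continuous_on_subset])
    show "continuous_on {t0..d} (\<lambda>s. f s (E s *\<^sub>R k s))"
      unfolding E_def by (intro continuous_on_compose_field[OF cont] continuous_intros that)
  qed (use \<tau> in auto)
  have integral_E: "integral {t0..\<tau>} E = (E \<tau> - 1) / (2 * K)"
  proof -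
    have "(E has_integral (E \<tau> / (2 * K) - E t0 / (2 * K))) {t0..\<tau>}"
    proof (rule fundamental_theorem_of_calculus)
      fix s assume "s \<in> {t0..\<tau>}"
      show "((\<lambda>s. E s / (2 * K)) has_vector_derivative E s) (at s within {t0..\<tau>})"
        unfolding E_def using K
        by (auto intro!: derivative_eq_intros simp: has_real_derivative_iff_has_vector_derivative[symmetric])
    qed (use \<tau> in auto)
    then show ?thesis
      by (simp add: integral_unique E_def diff_divide_distrib)
  qed
  have "norm (integral {t0..\<tau>} (\<lambda>s. f s (E s *\<^sub>R g s)) - integral {t0..\<tau>} (\<lambda>s. f s (E s *\<^sub>R h s)))
      = norm (integral {t0..\<tau>} (\<lambda>s. f s (E s *\<^sub>R g s) - f s (E s *\<^sub>R h s)))"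
    using integral_diff[OF integrable[OF g] integrable[OF h]] by simp
  also have "\<dots> \<le> integral {t0..\<tau>} (\<lambda>s. K * D * E s)"
  proof (rule integral_norm_bound_integral)
    show "(\<lambda>s. f s (E s *\<^sub>R g s) - f s (E s *\<^sub>R h s)) integrable_on {t0..\<tau>}"
      using integrable[OF g] integrable[OF h] by (rule integrable_diff)
    show "(\<lambda>s. K * D * E s) integrable_on {t0..\<tau>}"
      unfolding E_def by (intro integrable_continuous_interval continuous_intros)
    fix s assume s: "s \<in> {t0..\<tau>}"
    then have "s \<in> {t0..d}" using \<tau> by auto
    then have "dist (f s (E s *\<^sub>R g s)) (f s (E s *\<^sub>R h s)) \<le> K * dist (E s *\<^sub>R g s) (E s *\<^sub>R h s)"
      using lip by (auto intro: lipschitz_onD)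
    also have "\<dots> = K * E s * dist (g s) (h s)"
      by (simp add: E_def dist_norm scaleR_diff_right[symmetric])
    also have "\<dots> \<le> K * E s * D"
      using D[OF \<open>s \<in> {t0..d}\<close>] K by (intro mult_left_mono) (auto simp: E_def)
    finally show "norm (f s (E s *\<^sub>R g s) - f s (E s *\<^sub>R h s)) \<le> K * D * E s"
      by (simp add: dist_norm ac_simps)
  qed
  also have "\<dots> = D * (E \<tau> - 1) / 2"
    using integral_E K by simp
  finally show ?thesis .
qed

lemma lipschitz_ode_exists_Icc:
  fixes f :: "real \<Rightarrow> 'y::euclidean_space \<Rightarrow> 'y"
  assumes "t0 \<le> d" and cont: "continuous_on ({t0..d} \<times> UNIV) (\<lambda>(t, y). f t y)"
    and lip: "\<And>t. t \<in> {t0..d} \<Longrightarrow> K-lipschitz_on UNIV (f t)"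
  shows "\<exists>y. y t0 = y0 \<and> (\<forall>t\<in>{t0..d}. (y has_vector_derivative f t (y t)) (at t within {t0..d}))"
proof -
  define K' where "K' = K + 1"
  have K': "K' > 0"
    using lipschitz_on_nonneg[OF lip[of t0]] \<open>t0 \<le> d\<close> by (simp add: K'_def)
  have lip': "K'-lipschitz_on UNIV (f t)" if "t \<in> {t0..d}" for t
    using lipschitz_on_mono[OF lip[OF that] subset_refl] by (simp add: K'_def)
  \<comment> \<open>Bielecki's trick: seek \<open>y = E z\<close>; the weight \<open>E\<close> makes the Picard operator for \<open>z\<close>
    a \<open>1/2\<close>-contraction in the sup norm.\<close>
  define E where "E s = exp (2 * K' * (s - t0))" for s
  have E_pos: "E s > 0" for s
    by (simp add: E_def)
  define \<Phi> where "\<Phi> g t = (1 / E t) *\<^sub>R (y0 + integral {t0..t} (\<lambda>s. f s (E s *\<^sub>R g s)))"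
    for g :: "real \<Rightarrow> 'y" and t
  have integrand: "continuous_on {t0..d} (\<lambda>s. f s (E s *\<^sub>R g s))" if "continuous_on {t0..d} g" for g
    unfolding E_def by (intro continuous_on_compose_field[OF cont] continuous_intros that)
  have continuous_\<Phi>: "continuous_on {t0..d} (\<Phi> g)" if "continuous_on {t0..d} g" for g
    unfolding \<Phi>_def using E_pos
    by (intro continuous_intros indefinite_integral_continuous_1 integrable_continuous_interval integrand that)
      (auto simp: E_def intro!: continuous_intros)
  have "\<exists>h::real \<Rightarrow>\<^sub>C 'y. \<forall>t. h t = \<Phi> g (clamp t0 d t)" for g :: "real \<Rightarrow>\<^sub>C 'y"
  proof -
    have "continuous_on (cbox t0 d) (\<Phi> g)"
      using continuous_\<Phi>[of g] by auto
    from continuous_on_cbox_bcontfunE[OF this] show ?thesis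
      by metis
  qed
  then obtain T :: "(real \<Rightarrow>\<^sub>C 'y) \<Rightarrow> (real \<Rightarrow>\<^sub>C 'y)"
    where T: "\<And>g t. T g t = \<Phi> g (clamp t0 d t)"
    by metis
  have "dist (T g) (T h) \<le> (1/2) * dist g h" for g h
  proof (rule dist_bound)
    fix t
    define \<tau> where "\<tau> = clamp t0 d t"
    have \<tau>: "\<tau> \<in> {t0..d}"
      using clamp_in_interval[of t0 d t] \<open>t0 \<le> d\<close> by (simp add: \<tau>_def)
    have "dist (T g t) (T h t)
        = (1 / E \<tau>) * norm (integral {t0..\<tau>} (\<lambda>s. f s (E s *\<^sub>R g s)) - integral {t0..\<tau>} (\<lambda>s. f s (E s *\<^sub>R h s)))"
      using E_pos[of \<tau>] by (simp add: T \<Phi>_def \<tau>_def dist_norm scaleR_diff_right[symmetric])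
    also have "\<dots> \<le> (1 / E \<tau>) * (dist g h * (E \<tau> - 1) / 2)"
      using exp_weighted_picard_estimate[OF cont K' lip' _ _ _ \<tau>, of g h "dist g h"] E_pos[of \<tau>]
      by (intro mult_left_mono) (auto simp: E_def dist_bounded)
    also have "\<dots> \<le> (1/2) * dist g h"
      using E_pos[of \<tau>] by (simp add: field_simps)
    finally show "dist (T g t) (T h t) \<le> (1/2) * dist g h" .
  qed
  then obtain z where z: "T z = z"
    using banach_fix_type[of "1/2" T] by auto
  define y where "y t = y0 + integral {t0..t} (\<lambda>s. f s (E s *\<^sub>R z s))" for t
  have y_eq: "y t = E t *\<^sub>R z t" if "t \<in> {t0..d}" for t
    using T[of z t] z E_pos[of t] that by (simp add: \<Phi>_def y_def clamp_cancel_cbox)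
  show ?thesis
  proof (intro exI conjI ballI)
    show "y t0 = y0"
      by (simp add: y_def)
    fix t assume t: "t \<in> {t0..d}"
    from integral_has_vector_derivative[OF integrand[OF continuous_on_apply_bcontfun] t]
    have "(y has_vector_derivative f t (E t *\<^sub>R z t)) (at t within {t0..d})"
      unfolding y_def by (intro derivative_eq_intros) auto
    then show "(y has_vector_derivative f t (y t)) (at t within {t0..d})"
      using y_eq[OF t] by simp
  qed
qed

lemma lipschitz_ode_unique_Icc:
  fixes f :: "real \<Rightarrow> 'y::real_inner \<Rightarrow> 'y"
  assumes lip: "\<And>t. t \<in> {t0..d} \<Longrightarrow> K-lipschitz_on UNIV (f t)"
    and y: "\<And>t. t \<in> {t0..d} \<Longrightarrow> (y has_vector_derivative f t (y t)) (at t within {t0..d})"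
    and z: "\<And>t. t \<in> {t0..d} \<Longrightarrow> (z has_vector_derivative f t (z t)) (at t within {t0..d})"
    and "y t0 = z t0" and t: "t \<in> {t0..d}"
  shows "y t = z t"
proof -
  have K: "K \<ge> 0"
    using lip[OF t] by (rule lipschitz_on_nonneg)
  define w where "w s = y s - z s" for s
  define \<phi> where "\<phi> s = exp (- (2 * K * s)) * inner (w s) (w s)" for s
  have "\<phi> t \<le> \<phi> t0"
  proof (rule DERIV_nonpos_imp_decreasing_open[of t0 t \<phi>])
    show "t0 \<le> t"
      using t by simp
    have "continuous_on {t0..d} y"
      using y by (rule continuous_on_vector_derivative) auto
    moreover have "continuous_on {t0..d} z"
      using z by (rule continuous_on_vector_derivative) auto
    ultimately have "continuous_on {t0..t} w"
      unfolding w_def using t by (intro continuous_intros) (auto elim: continuous_on_subset)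
    then show "continuous_on {t0..t} \<phi>"
      unfolding \<phi>_def by (intro continuous_intros)
    fix s assume s: "t0 < s" "s < t"
    define D where "D = f s (y s) - f s (z s)"
    have "at s within {t0..d} = at s"
      using s t by (intro at_within_interior) auto
    then have "(w has_vector_derivative D) (at s)"
      unfolding w_def D_def using y[of s] z[of s] s t by (auto intro!: derivative_intros)
    from has_real_derivative_inner[OF this this]
    have "(\<phi> has_real_derivative exp (- (2 * K * s)) * (2 * inner (w s) D - 2 * K * inner (w s) (w s))) (at s)"
      unfolding \<phi>_def by (auto intro!: derivative_eq_intros simp: algebra_simps inner_commute)
    moreover have "inner (w s) D \<le> K * inner (w s) (w s)"
    proof -
      have "inner (w s) D \<le> norm (w s) * norm D"
        by (rule norm_cauchy_schwarz)
      also have "\<dots> \<le> norm (w s) * (K * norm (w s))"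
        using lipschitz_onD[OF lip, of s "y s" "z s"] s t
        by (intro mult_left_mono) (auto simp: dist_norm w_def D_def)
      finally show ?thesis
        by (simp add: power2_norm_eq_inner[symmetric] power2_eq_square ac_simps)
    qed
    ultimately show "\<exists>D. (\<phi> has_real_derivative D) (at s) \<and> D \<le> 0"
      by (intro exI conjI) (auto intro!: mult_nonneg_nonpos)
  qed
  moreover have "\<phi> t0 = 0"
    using \<open>y t0 = z t0\<close> by (simp add: \<phi>_def w_def)
  ultimately have "exp (- (2 * K * t)) * inner (w t) (w t) \<le> 0"
    by (simp add: \<phi>_def)
  then have "inner (w t) (w t) = 0"
    using inner_ge_zero[of "w t"] by (simp add: mult_le_0_iff)
  then show ?thesis
    by (simp add: w_def)
qed

lemma lipschitz_ode_exists_right: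
  fixes f :: "real \<Rightarrow> 'y::euclidean_space \<Rightarrow> 'y"
  assumes I: "is_interval I" "open I" "t0 \<in> I"
    and cont: "continuous_on (I \<times> UNIV) (\<lambda>(t, y). f t y)"
    and lip: "\<And>a b. {a..b} \<subseteq> I \<Longrightarrow> \<exists>K. \<forall>t\<in>{a..b}. K-lipschitz_on UNIV (f t)"
  shows "\<exists>y. y t0 = y0 \<and> (\<forall>t\<in>I \<inter> {t0..}. (y has_vector_derivative f t (y t)) (at t within {t0..}))"
proof -
  have segment: "{t0..d} \<subseteq> I" if "d \<in> I" for d
    using mem_is_interval_1_I[OF I(1,3) that] by auto
  define sol where "sol d = (SOME y. y t0 = y0 \<and>
      (\<forall>t\<in>{t0..d}. (y has_vector_derivative f t (y t)) (at t within {t0..d})))" for d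
  have sol: "sol d t0 = y0"
    "\<And>t. t \<in> {t0..d} \<Longrightarrow> (sol d has_vector_derivative f t (sol d t)) (at t within {t0..d})"
    if d: "d \<in> I" "t0 \<le> d" for d
  proof -
    obtain K where K: "\<And>t. t \<in> {t0..d} \<Longrightarrow> K-lipschitz_on UNIV (f t)"
      using lip[OF segment[OF d(1)]] by blast
    have "continuous_on ({t0..d} \<times> UNIV) (\<lambda>(t, y). f t y)"
      using cont by (rule continuous_on_subset) (use segment[OF d(1)] in auto)
    from someI_ex[OF lipschitz_ode_exists_Icc[OF d(2) this K]]
    show "sol d t0 = y0"
      "\<And>t. t \<in> {t0..d} \<Longrightarrow> (sol d has_vector_derivative f t (sol d t)) (at t within {t0..d})"
      unfolding sol_def by blast+
  qed
  have sol_agree: "sol d t = sol d' t" if "d \<in> I" "d' \<in> I" "t0 \<le> t" "t \<le> d" "t \<le> d'" for d d' t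
  proof -
    have "{t0..t} \<subseteq> I"
      using segment[OF \<open>d \<in> I\<close>] \<open>t \<le> d\<close> by auto
    then obtain K where K: "\<forall>s\<in>{t0..t}. K-lipschitz_on UNIV (f s)"
      using lip by blast
    show ?thesis
    proof (rule lipschitz_ode_unique_Icc[of t0 t K f "sol d" "sol d'" t])
      fix s assume s: "s \<in> {t0..t}"
      show "(sol d has_vector_derivative f s (sol d s)) (at s within {t0..t})"
        by (rule has_vector_derivative_within_subset[OF sol(2)[OF that(1)]]) (use s that in auto)
      show "(sol d' has_vector_derivative f s (sol d' s)) (at s within {t0..t})"
        by (rule has_vector_derivative_within_subset[OF sol(2)[OF that(2)]]) (use s that in auto)
    next
      show "sol d t0 = sol d' t0"
        using sol(1) that by auto
    qed (use K that in auto)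
  qed
  define y where "y t = sol t t" for t
  show ?thesis
  proof (intro exI conjI ballI)
    show "y t0 = y0"
      using sol(1) I(3) by (simp add: y_def)
    fix t assume t: "t \<in> I \<inter> {t0..}"
    obtain e where e: "e > 0" "ball t e \<subseteq> I"
      using I(2) t by (meson IntD1 openE)
    define d where "d = t + e / 2"
    have d: "d \<in> I" "t < d"
      using e by (auto simp: d_def dist_real_def intro!: subsetD[OF e(2)])
    have y_sol: "y s = sol d s" if "s \<in> {t0..d}" for s
      unfolding y_def using sol_agree[of s d s] that segment[OF d(1)] d(1) by auto
    have "(sol d has_vector_derivative f t (sol d t)) (at t within {t0..d})"
      using sol(2)[OF d(1)] d t by auto
    moreover have "at t within {t0..d} = at t within {t0..}"
      using d by (intro at_within_nhd[of _ "{..<d}"]) auto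
    ultimately have "(y has_vector_derivative f t (sol d t)) (at t within {t0..d})"
      by (intro has_vector_derivative_transform[OF _ y_sol]) (use d t in auto)
    then show "(y has_vector_derivative f t (y t)) (at t within {t0..})"
      using \<open>at t within {t0..d} = at t within {t0..}\<close> y_sol[of t] d t by auto
  qed
qed

lemma lipschitz_ode_exists_left:
  fixes f :: "real \<Rightarrow> 'y::euclidean_space \<Rightarrow> 'y"
  assumes I: "is_interval I" "open I" "t0 \<in> I"
    and cont: "continuous_on (I \<times> UNIV) (\<lambda>(t, y). f t y)"
    and lip: "\<And>a b. {a..b} \<subseteq> I \<Longrightarrow> \<exists>K. \<forall>t\<in>{a..b}. K-lipschitz_on UNIV (f t)"
  shows "\<exists>y. y t0 = y0 \<and> (\<forall>t\<in>I \<inter> {..t0}. (y has_vector_derivative f t (y t)) (at t within {..t0}))"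
proof -
  \<comment> \<open>Solving backwards in time is solving forwards for the reflected field.\<close>
  define g where "g s x = - f (- s) x" for s x
  have "\<exists>z. z (- t0) = y0 \<and>
      (\<forall>s\<in>uminus ` I \<inter> {- t0..}. (z has_vector_derivative g s (z s)) (at s within {- t0..}))"
  proof (rule lipschitz_ode_exists_right)
    show "is_interval (uminus ` I)" "open (uminus ` I)" "- t0 \<in> uminus ` I"
      using I by (auto simp: open_negations)
    have "continuous_on (uminus ` I \<times> UNIV) (\<lambda>p. (- fst p, snd p))"
      by (intro continuous_intros)
    from continuous_on_compose2[OF cont this]
    have "continuous_on (uminus ` I \<times> UNIV) (\<lambda>p. f (- fst p) (snd p))"
      by force
    then show "continuous_on (uminus ` I \<times> UNIV) (\<lambda>(s, x). g s x)"
      unfolding g_def by (auto intro!: continuous_intros simp: case_prod_beta)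
    fix a b assume "{a..b} \<subseteq> uminus ` I"
    then have "uminus ` {a..b} \<subseteq> uminus ` uminus ` I"
      by (rule image_mono)
    then have "{- b..- a} \<subseteq> I"
      by (simp add: image_image)
    then obtain K where "\<forall>t\<in>{- b..- a}. K-lipschitz_on UNIV (f t)"
      using lip by blast
    then show "\<exists>K. \<forall>s\<in>{a..b}. K-lipschitz_on UNIV (g s)"
      by (intro exI[of _ K]) (force simp: g_def)
  qed
  then obtain z where z: "z (- t0) = y0"
    "\<And>s. s \<in> uminus ` I \<inter> {- t0..} \<Longrightarrow> (z has_vector_derivative g s (z s)) (at s within {- t0..})"
    by blast
  show ?thesis
  proof (intro exI[of _ "\<lambda>t. z (- t)"] conjI ballI)
    show "z (- t0) = y0"
      by (fact z(1))
    fix t assume "t \<in> I \<inter> {..t0}"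
    then have "(z has_vector_derivative g (- t) (z (- t))) (at (- t) within uminus ` {..t0})"
      using z(2)[of "- t"] by simp
    from has_vector_derivative_reflect[OF this]
    show "((\<lambda>s. z (- s)) has_vector_derivative f t (z (- t))) (at t within {..t0})"
      by (simp add: g_def)
  qed
qed

lemma lipschitz_ode_exists:
  fixes f :: "real \<Rightarrow> 'y::euclidean_space \<Rightarrow> 'y"
  assumes I: "is_interval I" "open I" "t0 \<in> I"
    and cont: "continuous_on (I \<times> UNIV) (\<lambda>(t, y). f t y)"
    and lip: "\<And>a b. {a..b} \<subseteq> I \<Longrightarrow> \<exists>K. \<forall>t\<in>{a..b}. K-lipschitz_on UNIV (f t)"
  shows "\<exists>y. y t0 = y0 \<and> (\<forall>t\<in>I. (y has_vector_derivative f t (y t)) (at t))"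
proof -
  obtain yR where yR: "yR t0 = y0"
    "\<And>t. t \<in> I \<inter> {t0..} \<Longrightarrow> (yR has_vector_derivative f t (yR t)) (at t within {t0..})"
    using lipschitz_ode_exists_right[OF I cont lip] by blast
  obtain yL where yL: "yL t0 = y0"
    "\<And>t. t \<in> I \<inter> {..t0} \<Longrightarrow> (yL has_vector_derivative f t (yL t)) (at t within {..t0})"
    using lipschitz_ode_exists_left[OF I cont lip] by blast
  define y where "y t = (if t0 \<le> t then yR t else yL t)" for t
  have y_right: "(y has_vector_derivative f t (y t)) (at t within {t0..})" if "t \<in> I" "t0 \<le> t" for t
  proof (rule has_vector_derivative_transform)
    show "(yR has_vector_derivative f t (y t)) (at t within {t0..})"
      using yR(2)[of t] that by (simp add: y_def)
    show "\<And>s. s \<in> {t0..} \<Longrightarrow> y s = yR s"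
      by (simp add: y_def)
  qed (use that in simp)
  have y_left: "(y has_vector_derivative f t (y t)) (at t within {..t0})" if "t \<in> I" "t \<le> t0" for t
  proof (rule has_vector_derivative_transform)
    show "(yL has_vector_derivative f t (y t)) (at t within {..t0})"
      using yL(2)[of t] that yR(1) yL(1) by (auto simp: y_def)
    show "\<And>s. s \<in> {..t0} \<Longrightarrow> y s = yL s"
      using yR(1) yL(1) by (auto simp: y_def)
  qed (use that in simp)
  show ?thesis
  proof (intro exI conjI ballI)
    show "y t0 = y0"
      using yR(1) by (simp add: y_def)
    fix t assume "t \<in> I"
    consider "t < t0" | "t = t0" | "t0 < t"
      by linarith
    then show "(y has_vector_derivative f t (y t)) (at t)"
    proof cases
      case 1
      then have "at t within {..t0} = at t"
        by (intro at_within_interior) auto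
      then show ?thesis
        using y_left[OF \<open>t \<in> I\<close>] 1 by simp
    next
      case 2
      have "{t0..} \<union> {..t0} = (UNIV :: real set)"
        by auto
      then show ?thesis
        using has_vector_derivative_within_Un[OF y_right y_left, of t] \<open>t \<in> I\<close> 2 by simp
    next
      case 3
      then have "at t within {t0..} = at t"
        by (intro at_within_interior) auto
      then show ?thesis
        using y_right[OF \<open>t \<in> I\<close>] 3 by simp
    qed
  qed
qed

lemma lipschitz_ode_unique:
  fixes f :: "real \<Rightarrow> 'y::real_inner \<Rightarrow> 'y"
  assumes J: "is_interval J" "t0 \<in> J" "t \<in> J"
    and lip: "\<And>a b. {a..b} \<subseteq> J \<Longrightarrow> \<exists>K. \<forall>t\<in>{a..b}. K-lipschitz_on UNIV (f t)"
    and y: "\<And>t. t \<in> J \<Longrightarrow> (y has_vector_derivative f t (y t)) (at t)"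
    and z: "\<And>t. t \<in> J \<Longrightarrow> (z has_vector_derivative f t (z t)) (at t)"
    and "y t0 = z t0"
  shows "y t = z t"
proof (cases "t0 \<le> t")
  case True
  have "{t0..t} \<subseteq> J"
    using mem_is_interval_1_I[OF J(1,2,3)] by auto
  then obtain K where K: "\<forall>s\<in>{t0..t}. K-lipschitz_on UNIV (f s)"
    using lip by blast
  show ?thesis
  proof (rule lipschitz_ode_unique_Icc[of t0 t K f y z t])
    fix s assume "s \<in> {t0..t}"
    then have "s \<in> J"
      using \<open>{t0..t} \<subseteq> J\<close> by auto
    show "(y has_vector_derivative f s (y s)) (at s within {t0..t})"
      using y[OF \<open>s \<in> J\<close>] by (rule has_vector_derivative_at_within)
    show "(z has_vector_derivative f s (z s)) (at s within {t0..t})"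
      using z[OF \<open>s \<in> J\<close>] by (rule has_vector_derivative_at_within)
  qed (use K True \<open>y t0 = z t0\<close> in auto)
next
  case False
  have "{t..t0} \<subseteq> J"
    using mem_is_interval_1_I[OF J(1,3,2)] by auto
  then obtain K where K: "\<forall>s\<in>{t..t0}. K-lipschitz_on UNIV (f s)"
    using lip by blast
  have reflect: "((\<lambda>s. w (- s)) has_vector_derivative - f (- s) (w (- s))) (at s within {- t0..- t})"
    if w: "\<And>t. t \<in> J \<Longrightarrow> (w has_vector_derivative f t (w t)) (at t)" and s: "s \<in> {- t0..- t}" for w s
  proof (rule has_vector_derivative_reflect)
    have "- s \<in> J"
      using \<open>{t..t0} \<subseteq> J\<close> s by auto
    from w[OF this] show "(w has_vector_derivative f (- s) (w (- s))) (at (- s) within uminus ` {- t0..- t})"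
      by (rule has_vector_derivative_at_within)
  qed
  have "y (- (- t)) = z (- (- t))"
  proof (rule lipschitz_ode_unique_Icc[of "- t0" "- t" K "\<lambda>s x. - f (- s) x" "\<lambda>s. y (- s)" "\<lambda>s. z (- s)"])
    fix s assume "s \<in> {- t0..- t}"
    then show "K-lipschitz_on UNIV (\<lambda>x. - f (- s) x)"
      using K by simp
    show "((\<lambda>s. y (- s)) has_vector_derivative - f (- s) (y (- s))) (at s within {- t0..- t})"
      using y \<open>s \<in> {- t0..- t}\<close> by (rule reflect)
    show "((\<lambda>s. z (- s)) has_vector_derivative - f (- s) (z (- s))) (at s within {- t0..- t})"
      using z \<open>s \<in> {- t0..- t}\<close> by (rule reflect)
  qed (use \<open>y t0 = z t0\<close> False in auto)
  then show ?thesis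
    by simp
qed

section \<open>The potential\<close>

lemma Ck_Suc_imp_Ck: "Ck (Suc m) f \<Longrightarrow> Ck m f"
proof (induction m arbitrary: f)
  case 0
  then show ?case
    by (simp add: differentiable_imp_continuous_on differentiable_on_def)
next
  case (Suc m)
  then show ?case
    by simp
qed

lemma Ck_mono: "m \<le> k \<Longrightarrow> Ck k f \<Longrightarrow> Ck m f"
proof (induction k)
  case (Suc k)
  then show ?case
    by (metis Ck_Suc_imp_Ck le_Suc_eq)
qed simp

lemma continuous_eq_id_outside_ball:
  fixes G :: "'a::euclidean_space \<Rightarrow> 'a"
  assumes "continuous_on UNIV G" and "\<And>x. R < norm x \<Longrightarrow> G x = x" and "R \<le> norm x"
  shows "G x = x"
proof -
  have "closed {x. G x = x}"
    using assms(1) by (intro closed_Collect_eq continuous_intros) auto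
  moreover have "- cball 0 R \<subseteq> {x. G x = x}"
    using assms(2) by auto
  ultimately have "closure (- cball 0 R) \<subseteq> {x. G x = x}"
    by (rule closure_minimal[rotated])
  moreover have "x \<in> - ball 0 R"
    using assms(3) by simp
  ultimately show ?thesis
    by (auto simp: closure_complement)
qed

lemma C1_eq_id_outside_ball_imp_lipschitz:
  fixes G :: "'a::euclidean_space \<Rightarrow> 'a"
  assumes deriv: "\<And>x. (G has_derivative G' x) (at x)"
    and cont: "\<And>i. i \<in> Basis \<Longrightarrow> continuous_on UNIV (\<lambda>x. G' x i)"
    and id: "\<And>x. R < norm x \<Longrightarrow> G x = x"
  shows "\<exists>L. L-lipschitz_on UNIV G"
proof -
  define M where "M x = (\<Sum>i\<in>Basis. norm (G' x i))" for x
  have "continuous_on UNIV M"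
    unfolding M_def by (intro continuous_intros cont)
  then have "bounded (M ` cball 0 R)"
    by (intro compact_imp_bounded compact_continuous_image) (auto elim: continuous_on_subset)
  then obtain B where "\<forall>y\<in>M ` cball 0 R. norm y \<le> B"
    unfolding bounded_iff by blast
  then have B: "M x \<le> B" if "x \<in> cball 0 R" for x
    using that abs_le_D1[of "M x" B] by force
  have "M x = DIM('a)" if "R < norm x" for x
  proof -
    have "(G has_derivative id) (at x)"
      using has_derivative_id
    proof (rule has_derivative_transform_within_open)
      show "open {y :: 'a. R < norm y}"
        by (simp add: open_Collect_less continuous_on_norm_id)
    qed (use that id in auto)
    with deriv[of x] have "G' x = id"
      by (rule has_derivative_unique)
    then show ?thesis
      by (simp add: M_def)
  qed
  then have M_le: "M x \<le> max B DIM('a)" for x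
    using B[of x] by (cases "R < norm x") auto
  have "(max B DIM('a))-lipschitz_on UNIV G"
  proof (rule bounded_derivative_imp_lipschitz)
    fix x
    show "(G has_derivative G' x) (at x within UNIV)"
      by (rule deriv)
    have "onorm (G' x) \<le> M x"
      unfolding M_def using deriv[of x] by (intro onorm_componentwise has_derivative_bounded_linear)
    then show "onorm (G' x) \<le> max B DIM('a)"
      using M_le[of x] by linarith
  qed auto
  then show ?thesis ..
qed

lemma grad_eq_self_outside_ball:
  fixes V :: "'a::euclidean_space \<Rightarrow> real"
  assumes quadratic: "\<And>u. R \<le> norm u \<Longrightarrow> V u = (norm u)\<^sup>2 / 2" and "R < norm x"
  shows "grad V x = x"
proof -
  have "((\<lambda>y. inner y y / 2) has_derivative inner x) (at x)"
    by (auto intro!: derivative_eq_intros simp: inner_commute)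
  then have "(V has_derivative inner x) (at x)"
  proof (rule has_derivative_transform_within_open)
    show "open {y :: 'a. R < norm y}"
      by (simp add: open_Collect_less continuous_on_norm_id)
  qed (use assms in \<open>auto simp: power2_norm_eq_inner\<close>)
  then have "frechet_derivative V (at x) = inner x"
    by (simp add: frechet_derivative_at[symmetric])
  then show ?thesis
    by (simp add: grad_def euclidean_representation)
qed

lemma grad_has_derivative:
  assumes "Ck 2 V"
  shows "(grad V has_derivative (\<lambda>h. \<Sum>b\<in>Basis. hess V x b h *\<^sub>R b)) (at x)"
proof -
  have "(\<lambda>y. frechet_derivative V (at y) b) differentiable at x" for b
    using assms by (simp add: numeral_2_eq_2)
  then show ?thesis
    unfolding grad_def[abs_def] hess_def
    by (intro has_derivative_sum has_derivative_scaleR_left frechet_derivative_works[THEN iffD1])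
qed

lemma continuous_on_hess:
  assumes "Ck 2 V"
  shows "continuous_on UNIV (\<lambda>x. hess V x h k)"
  using assms by (simp add: numeral_2_eq_2 hess_def)

lemma grad_lipschitz:
  fixes V :: "'a::euclidean_space \<Rightarrow> real"
  assumes "Ck 2 V" and "\<And>u. R \<le> norm u \<Longrightarrow> V u = (norm u)\<^sup>2 / 2"
  shows "\<exists>L. L-lipschitz_on UNIV (grad V)"
proof (rule C1_eq_id_outside_ball_imp_lipschitz)
  show "(grad V has_derivative (\<lambda>h. \<Sum>b\<in>Basis. hess V x b h *\<^sub>R b)) (at x)" for x
    using assms(1) by (rule grad_has_derivative)
  show "continuous_on UNIV (\<lambda>x. \<Sum>b\<in>Basis. hess V x b i *\<^sub>R b)" for i
    using assms(1) by (intro continuous_intros continuous_on_hess)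
  show "grad V x = x" if "R < norm x" for x
    using assms(2) that by (rule grad_eq_self_outside_ball)
qed

section \<open>Radial solutions\<close>

lemma bounded_derivative_imp_tendsto_at_right:
  fixes u :: "real \<Rightarrow> 'a::banach"
  assumes "a < b"
    and deriv: "\<And>r. a < r \<Longrightarrow> r < b \<Longrightarrow> (u has_vector_derivative u' r) (at r)"
    and bound: "\<And>r. a < r \<Longrightarrow> r < b \<Longrightarrow> norm (u' r) \<le> B"
  obtains l where "(u \<longlongrightarrow> l) (at_right a)"
proof -
  have "B-lipschitz_on {a<..<b} u"
  proof (rule bounded_derivative_imp_lipschitz)
    fix r assume r: "r \<in> {a<..<b}"
    show "(u has_derivative (\<lambda>h. h *\<^sub>R u' r)) (at r within {a<..<b})"
      using deriv[of r] r unfolding has_vector_derivative_def by (auto intro: has_derivative_at_withinI)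
    show "onorm (\<lambda>h. h *\<^sub>R u' r) \<le> B"
      using bound[of r] r by (simp add: onorm_scaleR_left onorm_id)
  next
    have "a < (a + b) / 2" "(a + b) / 2 < b"
      using \<open>a < b\<close> by auto
    then show "0 \<le> B"
      using bound[of "(a + b) / 2"] norm_ge_zero[of "u' ((a + b) / 2)"] by linarith
  qed (rule convex_real_interval)
  then have "uniformly_continuous_on {a<..<b} u"
    by (rule lipschitz_on_uniformly_continuous)
  moreover have "a \<in> closure {a<..<b}"
    using \<open>a < b\<close> by simp
  ultimately obtain l where "(u \<longlongrightarrow> l) (at a within {a<..<b})"
    by (rule uniformly_continuous_on_extension_at_closure)
  moreover have "\<forall>\<^sub>F r in at a. r \<in> {a<..<b} \<longleftrightarrow> r \<in> {a<..}"
    using \<open>a < b\<close> by (auto simp: eventually_at dist_real_def intro!: exI[of _ "b - a"])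
  ultimately have "(u \<longlongrightarrow> l) (at a within {a<..})"
    by (rule Lim_transform_within_set)
  then show ?thesis
    using that by blast
qed

lemma DERIV_pos_imp_gt_at_right_limit:
  fixes g :: "real \<Rightarrow> real"
  assumes deriv: "\<And>r. a < r \<Longrightarrow> r < b \<Longrightarrow> (g has_real_derivative g' r) (at r)"
    and pos: "\<And>r. a < r \<Longrightarrow> r < b \<Longrightarrow> g' r > 0"
    and lim: "(g \<longlongrightarrow> L) (at_right a)" and r: "a < r" "r < b"
  shows "L < g r"
proof -
  have increasing: "g s < g t" if "a < s" "s < t" "t < b" for s t
  proof (rule DERIV_pos_imp_increasing[OF that(2)])
    fix x assume "s \<le> x" "x \<le> t"
    then have "a < x" "x < b"
      using that by auto
    then show "\<exists>y. (g has_real_derivative y) (at x) \<and> 0 < y"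
      using deriv pos by blast
  qed
  define m where "m = (a + r) / 2"
  have m: "a < m" "m < r"
    using r by (auto simp: m_def)
  have "\<forall>\<^sub>F s in at_right a. a < s \<and> s < m"
    using m by (auto simp: eventually_at_right_field)
  then have "\<forall>\<^sub>F s in at_right a. g s \<le> g m"
    by eventually_elim (use increasing m r in \<open>auto intro: less_imp_le\<close>)
  with lim have "L \<le> g m"
    by (rule tendsto_upperbound) simp
  also have "\<dots> < g r"
    using increasing m r by blast
  finally show ?thesis .
qed

lemma continuous_on_halfline_attains_max:
  fixes N :: "real \<Rightarrow> real"
  assumes cont: "continuous_on {a<..} N" and at_a: "(N \<longlongrightarrow> la) (at_right a)" and at_top: "(N \<longlongrightarrow> lb) at_top"
    and r1: "a < r1" "max la lb < N r1"
  shows "\<exists>r0>a. \<forall>r>a. N r \<le> N r0"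
proof -
  obtain d where d: "a < d" "\<And>r. a < r \<Longrightarrow> r < d \<Longrightarrow> N r < N r1"
    using order_tendstoD(2)[OF at_a, of "N r1"] r1 by (auto simp: eventually_at_right_field)
  obtain T where T: "\<And>r. T \<le> r \<Longrightarrow> N r < N r1"
    using order_tendstoD(2)[OF at_top, of "N r1"] r1 by (auto simp: eventually_at_top_linorder)
  define c where "c = min d r1"
  define e where "e = max T r1"
  have ce: "a < c" "c \<le> r1" "r1 \<le> e"
    using d r1 by (auto simp: c_def e_def)
  have "continuous_on {c..e} N"
    using cont by (rule continuous_on_subset) (use ce in auto)
  then obtain r0 where r0: "r0 \<in> {c..e}" "\<And>r. r \<in> {c..e} \<Longrightarrow> N r \<le> N r0"
    using continuous_attains_sup[of "{c..e}" N] ce by fastforce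
  have "N r \<le> N r0" if "a < r" for r
  proof (cases "r \<in> {c..e}")
    case False
    then have "N r < N r1"
      using d(2) T that by (force simp: c_def e_def)
    also have "N r1 \<le> N r0"
      using r0(2) ce by auto
    finally show ?thesis
      by simp
  qed (use r0 in auto)
  moreover have "a < r0"
    using r0(1) ce by auto
  ultimately show ?thesis
    by blast
qed

locale radial_solution =
  fixes n :: nat and G :: "'a::euclidean_space \<Rightarrow> 'a" and u u' :: "real \<Rightarrow> 'a"
  assumes u_deriv: "\<And>r. 0 < r \<Longrightarrow> (u has_vector_derivative u' r) (at r)"
    and u'_deriv: "\<And>r. 0 < r \<Longrightarrow> (u' has_vector_derivative - ((real n - 1) / r) *\<^sub>R u' r + G (u r)) (at r)"
begin

lemma continuous_on_u: "continuous_on {0<..} u"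
proof (rule continuous_on_vector_derivative)
  fix r :: real assume "r \<in> {0<..}"
  then show "(u has_vector_derivative u' r) (at r within {0<..})"
    by (intro has_vector_derivative_at_within[OF u_deriv]) simp
qed

lemma norm_sq_has_real_derivative:
  "0 < r \<Longrightarrow> ((\<lambda>r. (norm (u r))\<^sup>2) has_real_derivative 2 * inner (u r) (u' r)) (at r)"
  using has_real_derivative_inner[OF u_deriv u_deriv]
  by (simp add: power2_norm_eq_inner inner_commute)

lemma inner_has_real_derivative:
  assumes "0 < r"
  shows "((\<lambda>r. inner (u r) (u' r)) has_real_derivative
            (norm (u' r))\<^sup>2 - (real n - 1) / r * inner (u r) (u' r) + inner (u r) (G (u r))) (at r)"
  using has_real_derivative_inner[OF u_deriv[OF assms] u'_deriv[OF assms]]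
  by (rule DERIV_cong) (simp add: power2_norm_eq_inner inner_add_right inner_diff_right)

text \<open>The weight \<open>r\<^sup>n\<^sup>-\<^sup>1\<close> cancels the friction term \<open>-(n-1)/r u'\<close>.\<close>
lemma weighted_inner_has_real_derivative:
  assumes "1 \<le> n" and "0 < r"
  shows "((\<lambda>r. r ^ (n - 1) * inner (u r) (u' r)) has_real_derivative
            r ^ (n - 1) * ((norm (u' r))\<^sup>2 + inner (u r) (G (u r)))) (at r)"
proof -
  obtain m where m: "n = Suc m"
    using assms(1) by (cases n) auto
  have weight: "real m * r ^ (m - Suc 0) = real m / r * r ^ m"
    using assms(2) by (cases m) (auto simp: field_simps)
  have "((\<lambda>r. r ^ m * inner (u r) (u' r)) has_real_derivative
      r ^ m * ((norm (u' r))\<^sup>2 + inner (u r) (G (u r)))) (at r)"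
    using DERIV_mult[OF DERIV_pow[of m r] inner_has_real_derivative[OF assms(2)], unfolded weight]
    by (rule DERIV_cong) (simp add: m algebra_simps)
  then show ?thesis
    by (simp add: m)
qed

lemma norm_less_at_max:
  assumes G_id: "\<And>x. R \<le> norm x \<Longrightarrow> G x = x" and "0 < R"
    and r0: "0 < r0" and max: "\<And>r. 0 < r \<Longrightarrow> norm (u r) \<le> norm (u r0)"
  shows "norm (u r0) < R"
proof (rule ccontr)
  assume "\<not> norm (u r0) < R"
  then have "G (u r0) = u r0" and "u r0 \<noteq> 0"
    using G_id \<open>0 < R\<close> by auto
  define f where "f r = (norm (u r))\<^sup>2" for r
  have f_le: "f r \<le> f r0" if "0 < r" for r
    using max[OF that] by (simp add: f_def power_mono)
  \<comment> \<open>At a maximum \<open>u\<cdot>u'\<close> vanishes, while its derivative \<open>|u'|\<^sup>2 + |u|\<^sup>2\<close> is positive there.\<close>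
  have "2 * inner (u r0) (u' r0) = 0"
    using norm_sq_has_real_derivative[OF r0] r0 f_le unfolding f_def
    by (intro DERIV_local_max[of _ _ r0]) auto
  then have "0 < (norm (u' r0))\<^sup>2 - (real n - 1) / r0 * inner (u r0) (u' r0) + inner (u r0) (G (u r0))"
    using \<open>G (u r0) = u r0\<close> \<open>u r0 \<noteq> 0\<close> by (simp add: add_nonneg_pos)
  from DERIV_pos_inc_right[OF inner_has_real_derivative[OF r0] this]
  obtain d where d: "0 < d" "\<And>h. 0 < h \<Longrightarrow> h < d \<Longrightarrow> inner (u r0) (u' r0) < inner (u (r0 + h)) (u' (r0 + h))"
    by blast
  have "f r0 < f (r0 + d / 2)"
  proof (rule DERIV_pos_imp_increasing_open[of r0 "r0 + d / 2" f])
    fix r assume r: "r0 < r" "r < r0 + d / 2"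
    then have "0 < inner (u r) (u' r)"
      using d(2)[of "r - r0"] \<open>2 * inner (u r0) (u' r0) = 0\<close> by simp
    then show "\<exists>y. (f has_real_derivative y) (at r) \<and> 0 < y"
      using norm_sq_has_real_derivative[of r] r r0 unfolding f_def by (intro exI[of _ "2 * inner (u r) (u' r)"]) auto
  next
    show "continuous_on {r0..r0 + d / 2} f"
      unfolding f_def by (intro continuous_intros continuous_on_subset[OF continuous_on_u]) (use r0 in auto)
  qed (use d in simp)
  then show False
    using f_le[of "r0 + d / 2"] r0 d by simp
qed

lemma exists_norm_gt_limit_at_0:
  assumes "continuous_on UNIV G" and G_id: "\<And>x. R \<le> norm x \<Longrightarrow> G x = x"
    and "0 < R" and "1 \<le> n"
    and u_lim: "(u \<longlongrightarrow> l) (at_right 0)" and u'_lim: "(u' \<longlongrightarrow> 0) (at_right 0)"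
    and "R \<le> norm l"
  shows "\<exists>r>0. norm l < norm (u r)"
proof -
  have "((\<lambda>r. inner (u r) (G (u r))) \<longlongrightarrow> inner l (G l)) (at_right 0)"
    using assms(1) u_lim by (intro tendsto_intros continuous_on_tendsto_compose[of UNIV G]) auto
  moreover have "inner l (G l) > 0"
    using G_id \<open>R \<le> norm l\<close> \<open>0 < R\<close> by auto
  ultimately have "\<forall>\<^sub>F r in at_right 0. 0 < inner (u r) (G (u r))"
    by (rule order_tendstoD(1))
  then obtain \<delta> where \<delta>: "0 < \<delta>" "\<And>r. 0 < r \<Longrightarrow> r < \<delta> \<Longrightarrow> 0 < inner (u r) (G (u r))"
    by (auto simp: eventually_at_right_field)
  \<comment> \<open>\<open>r\<^sup>n\<^sup>-\<^sup>1 u\<cdot>u'\<close> starts at 0 and increases, so \<open>|u|\<close> increases near 0.\<close>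
  have weighted_pos: "0 < r ^ (n - 1) * inner (u r) (u' r)" if "0 < r" "r < \<delta>" for r
  proof (rule DERIV_pos_imp_gt_at_right_limit[where g = "\<lambda>r. r ^ (n - 1) * inner (u r) (u' r)", OF _ _ _ that])
    fix s assume s: "0 < s" "s < \<delta>"
    show "((\<lambda>r. r ^ (n - 1) * inner (u r) (u' r)) has_real_derivative
        s ^ (n - 1) * ((norm (u' s))\<^sup>2 + inner (u s) (G (u s)))) (at s)"
      using \<open>1 \<le> n\<close> s(1) by (rule weighted_inner_has_real_derivative)
    show "0 < s ^ (n - 1) * ((norm (u' s))\<^sup>2 + inner (u s) (G (u s)))"
      using \<delta>(2)[OF s] s(1) by (simp add: add_nonneg_pos)
  next
    show "((\<lambda>r. r ^ (n - 1) * inner (u r) (u' r)) \<longlongrightarrow> 0) (at_right 0)"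
      using tendsto_mult[OF tendsto_power[OF tendsto_ident_at, of "n - 1"] tendsto_inner[OF u_lim u'_lim]]
      by simp
  qed
  have "(norm l)\<^sup>2 < (norm (u (\<delta> / 2)))\<^sup>2"
  proof (rule DERIV_pos_imp_gt_at_right_limit[where g = "\<lambda>r. (norm (u r))\<^sup>2"])
    show "((\<lambda>r. (norm (u r))\<^sup>2) \<longlongrightarrow> (norm l)\<^sup>2) (at_right 0)"
      using u_lim by (intro tendsto_intros)
    fix r assume r: "0 < r" "r < \<delta>"
    show "((\<lambda>r. (norm (u r))\<^sup>2) has_real_derivative 2 * inner (u r) (u' r)) (at r)"
      using r(1) by (rule norm_sq_has_real_derivative)
    show "0 < 2 * inner (u r) (u' r)"
      using weighted_pos[OF r] r(1) by (simp add: zero_less_mult_iff)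
  qed (use \<delta> in auto)
  then show ?thesis
    using \<delta>(1) by (intro exI[of _ "\<delta> / 2"]) (auto dest: power_less_imp_less_base)
qed

lemma sup_norm_less:
  assumes "continuous_on UNIV G" and G_id: "\<And>x. R \<le> norm x \<Longrightarrow> G x = x"
    and "0 < R" and "1 \<le> n"
    and u'_lim: "(u' \<longlongrightarrow> 0) (at_right 0)"
    and u_lim: "(u \<longlongrightarrow> u_inf) at_top" and "G u_inf = 0"
  shows "bdd_above ((\<lambda>r. norm (u r)) ` {0<..}) \<and> (SUP r\<in>{0<..}. norm (u r)) < R"
proof -
  obtain \<delta> where "0 < \<delta>" and u'_bound: "\<And>r. 0 < r \<Longrightarrow> r < \<delta> \<Longrightarrow> norm (u' r) \<le> 1"
    using order_tendstoD(2)[OF tendsto_norm[OF u'_lim], of 1]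
    by (auto simp: eventually_at_right_field less_imp_le)
  obtain l where u_lim0: "(u \<longlongrightarrow> l) (at_right 0)"
    by (rule bounded_derivative_imp_tendsto_at_right[of 0 \<delta> u u' 1]) (use \<open>0 < \<delta>\<close> u_deriv u'_bound in auto)
  have "norm u_inf < R"
    using G_id \<open>G u_inf = 0\<close> \<open>0 < R\<close> by (cases "R \<le> norm u_inf") auto
  define m where "m = max (norm l) (norm u_inf)"
  have max: "\<exists>r0>0. (\<forall>r>0. norm (u r) \<le> norm (u r0)) \<and> norm (u r0) < R"
    if r1: "0 < r1" "m < norm (u r1)" for r1
  proof -
    have "continuous_on {0<..} (\<lambda>r. norm (u r))"
      using continuous_on_u by (intro continuous_intros)
    moreover have "((\<lambda>r. norm (u r)) \<longlongrightarrow> norm l) (at_right 0)"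
      using u_lim0 by (rule tendsto_norm)
    moreover have "((\<lambda>r. norm (u r)) \<longlongrightarrow> norm u_inf) at_top"
      using u_lim by (rule tendsto_norm)
    ultimately obtain r0 where "0 < r0" "\<forall>r>0. norm (u r) \<le> norm (u r0)"
      using continuous_on_halfline_attains_max[of 0 "\<lambda>r. norm (u r)" "norm l" "norm u_inf" r1] r1
      unfolding m_def by blast
    with norm_less_at_max[OF G_id \<open>0 < R\<close>] show ?thesis
      by blast
  qed
  have "norm l < R"
  proof (rule ccontr)
    assume "\<not> norm l < R"
    then obtain r1 where r1: "0 < r1" "norm l < norm (u r1)"
      using exists_norm_gt_limit_at_0[OF assms(1) G_id \<open>0 < R\<close> \<open>1 \<le> n\<close> u_lim0 u'_lim] by auto
    moreover have "m < norm (u r1)"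
      using r1 \<open>norm u_inf < R\<close> \<open>\<not> norm l < R\<close> by (simp add: m_def)
    ultimately obtain r0 where "\<forall>r>0. norm (u r) \<le> norm (u r0)" "norm (u r0) < R"
      using max by blast
    then show False
      using r1 \<open>\<not> norm l < R\<close> by force
  qed
  show ?thesis
  proof (cases "\<exists>r1>0. m < norm (u r1)")
    case True
    then obtain r0 where "0 < r0" "\<forall>r>0. norm (u r) \<le> norm (u r0)" "norm (u r0) < R"
      using max by blast
    then show ?thesis
      by (auto intro!: bdd_aboveI2 cSUP_least[THEN order.strict_trans1])
  next
    case False
    then have "\<forall>r>0. norm (u r) \<le> m"
      by (meson not_less)
    moreover have "m < R"
      using \<open>norm l < R\<close> \<open>norm u_inf < R\<close> by (simp add: m_def)
    ultimately show ?thesis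
      by (auto intro!: bdd_aboveI2 cSUP_least[THEN order.strict_trans1])
  qed
qed

end

lemma radial_field_lipschitz:
  fixes G :: "'a::real_normed_vector \<Rightarrow> 'a"
  assumes G: "L-lipschitz_on UNIV G" and "0 < a" and "a \<le> t"
  shows "(sqrt (1 + (\<bar>c\<bar> / a + L)\<^sup>2))-lipschitz_on UNIV (\<lambda>y. (snd y, - (c / t) *\<^sub>R snd y + G (fst y)))"
proof -
  have fst: "1-lipschitz_on UNIV (fst :: 'a \<times> 'a \<Rightarrow> 'a)" and snd: "1-lipschitz_on UNIV (snd :: 'a \<times> 'a \<Rightarrow> 'a)"
    by (intro lipschitz_onI; simp add: dist_fst_le dist_snd_le)+
  have "\<bar>- (c / t)\<bar> \<le> \<bar>c\<bar> / a"
    using assms(2,3) by (simp add: abs_div frac_le)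
  from lipschitz_on_cmult_upper[OF snd this]
  have "(\<bar>c\<bar> / a * 1)-lipschitz_on UNIV (\<lambda>y :: 'a \<times> 'a. - (c / t) *\<^sub>R snd y)" .
  moreover have "(L * 1)-lipschitz_on UNIV (\<lambda>y :: 'a \<times> 'a. G (fst y))"
    using fst lipschitz_on_subset[OF G] by (rule lipschitz_on_compose2) simp
  ultimately have "(\<bar>c\<bar> / a + L)-lipschitz_on UNIV (\<lambda>y :: 'a \<times> 'a. - (c / t) *\<^sub>R snd y + G (fst y))"
    using lipschitz_on_add by fastforce
  from lipschitz_on_Pair[OF snd this] show ?thesis
    by simp
qed

lemma radial_ode_extends:
  fixes G :: "'a::euclidean_space \<Rightarrow> 'a"
  assumes G: "L-lipschitz_on UNIV G"
    and J: "is_interval J" "J \<noteq> {}" "J \<subseteq> {0<..}"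
    and u: "\<And>r. r \<in> J \<Longrightarrow> (u has_vector_derivative u' r) (at r)"
    and u': "\<And>r. r \<in> J \<Longrightarrow> (u' has_vector_derivative - ((real n - 1) / r) *\<^sub>R u' r + G (u r)) (at r)"
  shows "\<exists>w w'. (\<forall>r>0. (w has_vector_derivative w' r) (at r) \<and>
                   (w' has_vector_derivative - ((real n - 1) / r) *\<^sub>R w' r + G (w r)) (at r))
              \<and> (\<forall>r\<in>J. w r = u r)"
proof -
  define F where "F t y = (snd y, - ((real n - 1) / t) *\<^sub>R snd y + G (fst y))" for t :: real and y :: "'a \<times> 'a"
  have lip: "\<exists>K. \<forall>t\<in>{a..b}. K-lipschitz_on UNIV (F t)" if "{a..b} \<subseteq> I" "I \<subseteq> {0<..}" for a b I
  proof (cases "a \<le> b")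
    case True
    then have "0 < a"
      using that by auto
    then have "\<forall>t\<in>{a..b}. (sqrt (1 + (\<bar>real n - 1\<bar> / a + L)\<^sup>2))-lipschitz_on UNIV (F t)"
      unfolding F_def using radial_field_lipschitz[OF G] by simp
    then show ?thesis
      by blast
  qed simp
  have "continuous_on ({0<..} \<times> UNIV) (\<lambda>p :: real \<times> 'a \<times> 'a. G (fst (snd p)))"
    using lipschitz_on_continuous_on[OF G] by (rule continuous_on_compose2) (auto intro!: continuous_intros)
  then have cont: "continuous_on ({0<..} \<times> UNIV) (\<lambda>(t, y). F t y)"
    unfolding F_def case_prod_beta by (intro continuous_intros) auto
  obtain t0 where "t0 \<in> J"
    using J(2) by blast
  have "\<exists>Y. Y t0 = (u t0, u' t0) \<and> (\<forall>t\<in>{0<..}. (Y has_vector_derivative F t (Y t)) (at t))"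
    using \<open>t0 \<in> J\<close> J(3)
    by (intro lipschitz_ode_exists[OF is_interval_oi open_greaterThan _ cont lip[OF _ subset_refl]]) auto
  then obtain Y where Y: "Y t0 = (u t0, u' t0)" "\<And>t. 0 < t \<Longrightarrow> (Y has_vector_derivative F t (Y t)) (at t)"
    by auto
  have Y_eq: "Y r = (u r, u' r)" if "r \<in> J" for r
  proof (rule lipschitz_ode_unique[OF J(1) \<open>t0 \<in> J\<close> that lip[OF _ J(3)]])
    fix t assume "t \<in> J"
    show "(Y has_vector_derivative F t (Y t)) (at t)"
      using Y(2) \<open>t \<in> J\<close> J(3) by auto
    show "((\<lambda>r. (u r, u' r)) has_vector_derivative F t (u t, u' t)) (at t)"
      unfolding F_def using u u' \<open>t \<in> J\<close> by (auto intro: has_vector_derivative_Pair)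
  next
    show "Y t0 = (u t0, u' t0)"
      by (rule Y(1))
  qed
  have w_deriv: "((\<lambda>r. fst (Y r)) has_vector_derivative snd (Y r)) (at r) \<and>
      ((\<lambda>r. snd (Y r)) has_vector_derivative - ((real n - 1) / r) *\<^sub>R snd (Y r) + G (fst (Y r))) (at r)"
    if "0 < r" for r
    using has_derivative_fst[OF Y(2)[OF that, unfolded has_vector_derivative_def]]
      has_derivative_snd[OF Y(2)[OF that, unfolded has_vector_derivative_def]]
    by (simp add: has_vector_derivative_def F_def)
  have w_eq: "fst (Y r) = u r" if "r \<in> J" for r
    using Y_eq[OF that] by simp
  show ?thesis
    by (rule exI[of _ "\<lambda>r. fst (Y r)"], rule exI[of _ "\<lambda>r. snd (Y r)"]) (use w_deriv w_eq in simp)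
qed

lemma solves_on_extends:
  fixes V :: "'a::euclidean_space \<Rightarrow> real"
  assumes "L-lipschitz_on UNIV (grad V)"
    and "is_interval J" "J \<noteq> {}" "J \<subseteq> {0<..}" and "solves_on n V u J"
  shows "\<exists>w. solves_on n V w {0<..} \<and> (\<forall>r\<in>J. w r = u r)"
proof -
  obtain u' where "\<And>r. r \<in> J \<Longrightarrow> (u has_vector_derivative u' r) (at r)"
    "\<And>r. r \<in> J \<Longrightarrow> (u' has_vector_derivative - ((real n - 1) / r) *\<^sub>R u' r + grad V (u r)) (at r)"
    using assms(5) unfolding solves_on_def by blast
  from radial_ode_extends[OF assms(1-4) this] obtain w w'
    where "\<forall>r>0. (w has_vector_derivative w' r) (at r) \<and>
        (w' has_vector_derivative - ((real n - 1) / r) *\<^sub>R w' r + grad V (w r)) (at r)"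
    and "\<forall>r\<in>J. w r = u r"
    by blast
  then show ?thesis
    unfolding solves_on_def by (intro exI[of _ w] conjI exI[of _ w']) auto
qed

lemma S_V_sup_norm_less:
  fixes V :: "'a::euclidean_space \<Rightarrow> real"
  assumes "continuous_on UNIV (grad V)" and "\<And>x. R \<le> norm x \<Longrightarrow> grad V x = x"
    and "0 < R" and "1 \<le> n" and "u \<in> S_V n V"
  shows "bdd_above ((\<lambda>r. norm (u r)) ` {0<..}) \<and> (SUP r\<in>{0<..}. norm (u r)) < R"
proof -
  obtain u' u_inf
    where sol: "\<forall>r\<in>{0<..}. (u has_vector_derivative u' r) (at r) \<and>
        (u' has_vector_derivative - ((real n - 1) / r) *\<^sub>R u' r + grad V (u r)) (at r)"
    and lim0: "((\<lambda>r. vector_derivative u (at r)) \<longlongrightarrow> 0) (at_right 0)"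
    and "(u \<longlongrightarrow> u_inf) at_top" "grad V u_inf = 0"
    using assms(5) unfolding S_V_def solves_on_def by blast
  interpret radial_solution n "grad V" u u'
    using sol by unfold_locales auto
  have "\<forall>\<^sub>F r in at_right 0. vector_derivative u (at r) = u' r"
    using eventually_at_right_less[of 0] by eventually_elim (rule vector_derivative_at[OF u_deriv])
  from Lim_transform_eventually[OF lim0 this] have "(u' \<longlongrightarrow> 0) (at_right 0)" .
  from sup_norm_less[OF assms(1-4) this \<open>(u \<longlongrightarrow> u_inf) at_top\<close> \<open>grad V u_inf = 0\<close>] show ?thesis .
qed

theorem lemma3p1:
  fixes V :: "'a::euclidean_space \<Rightarrow> real" and n k :: nat and R :: real
  assumes "n \<ge> 2" and "k \<ge> 1" and "R > 0"
    and "Ck (k + 1) V"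
    and "\<And>u. norm u \<ge> R \<Longrightarrow> V u = (norm u)\<^sup>2 / 2"
  shows "(\<forall>J u. is_interval J \<and> open J \<and> J \<noteq> {} \<and> J \<subseteq> {0<..} \<and> solves_on n V u J
            \<longrightarrow> (\<exists>w. solves_on n V w {0<..} \<and> (\<forall>r\<in>J. w r = u r)))
       \<and> (\<forall>u\<in>S_V n V. bdd_above ((\<lambda>r. norm (u r)) ` {0<..})
                          \<and> (SUP r\<in>{0<..}. norm (u r)) < R)"
proof -
  have "Ck 2 V"
    using Ck_mono[OF _ assms(4)] assms(2) by simp
  then obtain L where L: "L-lipschitz_on UNIV (grad V)"
    using grad_lipschitz assms(5) by blast
  have grad_id: "grad V x = x" if "R \<le> norm x" for x
    using lipschitz_on_continuous_on[OF L] grad_eq_self_outside_ball[OF assms(5)] that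
    by (rule continuous_eq_id_outside_ball)
  have extends: "\<exists>w. solves_on n V w {0<..} \<and> (\<forall>r\<in>J. w r = u r)"
    if "is_interval J \<and> open J \<and> J \<noteq> {} \<and> J \<subseteq> {0<..} \<and> solves_on n V u J" for J u
    using that by (elim conjE) (rule solves_on_extends[OF L])
  have bounded: "bdd_above ((\<lambda>r. norm (u r)) ` {0<..}) \<and> (SUP r\<in>{0<..}. norm (u r)) < R"
    if "u \<in> S_V n V" for u
    using S_V_sup_norm_less[OF lipschitz_on_continuous_on[OF L] grad_id assms(3) _ that] assms(1) by simp
  show ?thesis
    by (simp add: extends bounded)
qed

end
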